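(* Let $S$ be a monoid, $A$ a right $S$-act with a maximal subact $B$, and $a\in A\setminus B$. The following are equivalent: (1) $\mathfrak{M}=\{s\in S\mid as\in B\}$; (2) for $s\in S$, $as=a$ implies $s\notin\mathfrak{M}$.
   Context: $S$ is a monoid with identity $1$ having at least one right non-invertible element. A (right) $S$-act is a nonempty set with an action $(a,s)\mapsto as$, $a1=a$, $a(st)=(as)t$. A subact is a nonempty subset closed under the action; a maximal subact is a proper subact not properly contained in another proper subact. $\mathfrak{M}=\{s\in S\mid st\neq1\ \forall t\in S\}$ is the unique maximal right ideal of $S$. *)

theory Defs
  imports Main
begin

definition is_act :: "'a set \<Rightarrow> ('a \<Rightarrow> 's::monoid_mult \<Rightarrow> 'a) \<Rightarrow> bool" where
  "is_act A act \<longleftrightarrow> A \<noteq> {} \<and> (\<forall>a\<in>A. \<forall>s. act a s \<in> A)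
     \<and> (\<forall>a\<in>A. act a 1 = a) \<and> (\<forall>a\<in>A. \<forall>s t. act a (s * t) = act (act a s) t)"

definition is_subact :: "'a set \<Rightarrow> ('a \<Rightarrow> 's::monoid_mult \<Rightarrow> 'a) \<Rightarrow> 'a set \<Rightarrow> bool" where
  "is_subact A act B \<longleftrightarrow> B \<noteq> {} \<and> B \<subseteq> A \<and> (\<forall>b\<in>B. \<forall>s. act b s \<in> B)"

definition is_maximal_subact :: "'a set \<Rightarrow> ('a \<Rightarrow> 's::monoid_mult \<Rightarrow> 'a) \<Rightarrow> 'a set \<Rightarrow> bool" where
  "is_maximal_subact A act B \<longleftrightarrow> is_subact A act B \<and> B \<noteq> A
     \<and> (\<forall>C. is_subact A act C \<and> C \<noteq> A \<and> B \<subseteq> C \<longrightarrow> C = B)"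

definition MM :: "'s::monoid_mult set" where
  "MM = {s. \<forall>t. s * t \<noteq> 1}"

end

theory Submission
  imports Defs
begin

text \<open>If \<open>as \<notin> B\<close>, then \<open>B \<union> asS\<close> is a subact properly containing the maximal subact \<open>B\<close>,
  hence equals \<open>A\<close>; so \<open>a = ast\<close> for some \<open>t\<close>, and condition (2) makes \<open>st\<close>, hence \<open>s\<close>,
  right invertible. Conversely \<open>as \<in> B\<close> forces \<open>s \<in> MM\<close>, since \<open>st = 1\<close> would give
  \<open>a = ast \<in> B\<close>.\<close>

lemma MM_mult_right: "s \<in> MM \<Longrightarrow> s * t \<in> MM"
  unfolding MM_def by (simp add: mult.assoc)

lemma cyclic_subact:
  assumes act: "is_act A act" and x: "x \<in> A"
  shows "is_subact A act (range (act x))"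
  unfolding is_subact_def
proof (intro conjI ballI allI)
  show "range (act x) \<noteq> {}" by simp
  show "range (act x) \<subseteq> A" using act x unfolding is_act_def by auto
  fix y s assume "y \<in> range (act x)"
  then obtain t where "y = act x t" by blast
  then have "act y s = act x (t * s)" using act x unfolding is_act_def by simp
  then show "act y s \<in> range (act x)" by simp
qed

lemma subact_Un:
  "is_subact A act B \<Longrightarrow> is_subact A act C \<Longrightarrow> is_subact A act (B \<union> C)"
  unfolding is_subact_def by auto

lemma maximal_subact_Un_cyclic:
  assumes act: "is_act A act" and max: "is_maximal_subact A act B"
    and x: "x \<in> A" "x \<notin> B"
  shows "B \<union> range (act x) = A"
proof -
  have "is_subact A act B"
    using max unfolding is_maximal_subact_def by simp
  then have sub: "is_subact A act (B \<union> range (act x))"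
    using subact_Un cyclic_subact[OF act x(1)] by blast
  have "act x 1 = x"
    using act x(1) unfolding is_act_def by blast
  then have "x \<in> range (act x)"
    by (metis rangeI)
  then have "B \<union> range (act x) \<noteq> B"
    using x(2) by blast
  moreover have "B \<subseteq> B \<union> range (act x)"
    by blast
  ultimately show ?thesis
    using max sub unfolding is_maximal_subact_def by metis
qed

lemma act_returns_if_not_in_maximal_subact:
  assumes act: "is_act A act" and max: "is_maximal_subact A act B"
    and a: "a \<in> A" "a \<notin> B" and as: "act a s \<notin> B"
  obtains t where "act a (s * t) = a"
proof -
  have "act a s \<in> A"
    using act a(1) unfolding is_act_def by blast
  with maximal_subact_Un_cyclic[OF act max _ as] a have "a \<in> range (act (act a s))"
    by blast
  then obtain t where "a = act (act a s) t"
    by blast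
  also have "\<dots> = act a (s * t)"
    using act a(1) unfolding is_act_def by simp
  finally show ?thesis
    by (rule that[OF sym])
qed

lemma act_in_subact_imp_MM:
  assumes act: "is_act A act" and sub: "is_subact A act B"
    and a: "a \<in> A" "a \<notin> B" and as: "act a s \<in> B"
  shows "s \<in> MM"
  unfolding MM_def
proof (intro CollectI allI notI)
  fix t assume "s * t = 1"
  have "act (act a s) t = act a (s * t)"
    using act a(1) unfolding is_act_def by simp
  also have "\<dots> = a"
    using act a(1) \<open>s * t = 1\<close> unfolding is_act_def by simp
  finally have "act (act a s) t = a" .
  moreover have "act (act a s) t \<in> B"
    using sub as unfolding is_subact_def by simp
  ultimately show False
    using a(2) by simp
qed

theorem lemma2p7:
  fixes A :: "'a set" and act :: "'a \<Rightarrow> 's::monoid_mult \<Rightarrow> 'a" and B :: "'a set" and a :: 'a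
  assumes nonunit: "\<exists>s::'s. \<forall>t. s * t \<noteq> 1"
    and act: "is_act A act"
    and max: "is_maximal_subact A act B"
    and a: "a \<in> A" "a \<notin> B"
  shows "(MM = {s. act a s \<in> B}) \<longleftrightarrow> (\<forall>s. act a s = a \<longrightarrow> s \<notin> MM)"
proof
  assume MM_eq: "MM = {s. act a s \<in> B}"
  show "\<forall>s. act a s = a \<longrightarrow> s \<notin> MM"
  proof (intro allI impI notI)
    fix s assume "act a s = a" "s \<in> MM"
    with MM_eq have "a \<in> B" by force
    with a(2) show False ..
  qed
next
  assume fixers: "\<forall>s. act a s = a \<longrightarrow> s \<notin> MM"
  have sub: "is_subact A act B"
    using max unfolding is_maximal_subact_def by simp
  show "MM = {s. act a s \<in> B}"
  proof (intro set_eqI iffI CollectI)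
    fix s :: 's assume s: "s \<in> MM"
    show "act a s \<in> B"
    proof (rule ccontr)
      assume "act a s \<notin> B"
      then obtain t where "act a (s * t) = a"
        using act_returns_if_not_in_maximal_subact[OF act max a] by blast
      with fixers MM_mult_right[OF s] show False by blast
    qed
  next
    fix s :: 's assume "s \<in> {s. act a s \<in> B}"
    then show "s \<in> MM"
      using act_in_subact_imp_MM[OF act sub a] by simp
  qed
qed

end
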